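(* Let $\Lambda>0$, $e\ge\Lambda$, $\phi_h>0$, $f:[0,\phi_h]\to(0,1]$ strictly concave, strictly decreasing, differentiable with $f(0)=1$. Consider the two-player game with action sets $[0,\phi_h]$ and payoffs $\tilde{\mathcal M}_i(\phi_i,\phi_{-i})=0$ if $\phi_i>\phi_{-i}$, $=\frac{\Lambda}{2}f(\phi_i)\phi_i$ if $\phi_i=\phi_{-i}$, and $=\min\{\Lambda f(\phi_i),e\}\phi_i$ if $\phi_i<\phi_{-i}$. Let $\epsilon>0$ and suppose $0<\delta\le\phi_h$ satisfies $\sup_{\phi\le\delta}\Lambda f(\phi)\phi<\epsilon$. Then $(\delta,\delta)$ is an $\epsilon$-Nash equilibrium.
   Context: These payoffs are the limiting (driver abandonment rate $\beta\to0$) long-run revenue rates of two symmetric ride-hailing platforms using static prices, when passengers (total Poisson rate $\Lambda$) split across platforms by a Wardrop equilibrium equalizing the probability of not obtaining a ride, in the regime $e\ge\Lambda$ where $e$ is the effective driver arrival rate per platform; $f(\phi)$ is the probability a passenger accepts price $\phi$. A profile $(\phi_1,\phi_2)$ is an $\epsilon$-Nash equilibrium if for each player $i$ and each $\phi_i'\in[0,\phi_h]$, $\tilde{\mathcal M}_i(\phi_i',\phi_{-i})\le\tilde{\mathcal M}_i(\phi_i,\phi_{-i})+\epsilon$. *)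

theory Defs
  imports "HOL-Analysis.Analysis"
begin

definition strict_concave_on :: "real set \<Rightarrow> (real \<Rightarrow> real) \<Rightarrow> bool" where
  "strict_concave_on S f \<longleftrightarrow> convex S \<and>
     (\<forall>x\<in>S. \<forall>y\<in>S. \<forall>t. x \<noteq> y \<and> 0 < t \<and> t < 1 \<longrightarrow>
        f ((1 - t) * x + t * y) > (1 - t) * f x + t * f y)"

definition payoff :: "real \<Rightarrow> real \<Rightarrow> (real \<Rightarrow> real) \<Rightarrow> real \<Rightarrow> real \<Rightarrow> real" where
  "payoff Lam e f phi_i phi_o =
     (if phi_i > phi_o then 0
      else if phi_i = phi_o then Lam / 2 * f phi_i * phi_i
      else min (Lam * f phi_i) e * phi_i)"

definition eps_nash :: "real \<Rightarrow> real \<Rightarrow> (real \<Rightarrow> real) \<Rightarrow> real \<Rightarrow> real \<Rightarrow> real \<Rightarrow> real \<Rightarrow> bool" where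
  "eps_nash Lam e f phi_h eps phi1 phi2 \<longleftrightarrow>
     (\<forall>phi' \<in> {0..phi_h}. payoff Lam e f phi' phi2 \<le> payoff Lam e f phi1 phi2 + eps) \<and>
     (\<forall>phi' \<in> {0..phi_h}. payoff Lam e f phi' phi1 \<le> payoff Lam e f phi2 phi1 + eps)"

end

theory Submission
  imports Defs
begin

text \<open>At the symmetric profile (\<delta>, \<delta>) a deviation above \<delta> earns nothing, while a
  deviation below \<delta> earns at most the monopoly revenue \<Lambda> f(\<phi>) \<phi> with \<phi> < \<delta>, which is
  below \<epsilon> by the choice of \<delta>. Since the equilibrium payoff itself is nonnegative, no
  deviation gains more than \<epsilon>.\<close>

lemma eps_nash_diagonal_iff:
  "eps_nash Lam e f phi_h eps d d \<longleftrightarrow>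
     (\<forall>p\<in>{0..phi_h}. payoff Lam e f p d \<le> payoff Lam e f d d + eps)"
  unfolding eps_nash_def by simp

lemma payoff_diagonal_nonneg:
  assumes "0 \<le> Lam" and "0 \<le> f d" and "0 \<le> d"
  shows "0 \<le> payoff Lam e f d d"
  using assms unfolding payoff_def by simp

lemma payoff_above_eq_0:
  assumes "q < p"
  shows "payoff Lam e f p q = 0"
  using assms unfolding payoff_def by simp

lemma payoff_below_le_revenue:
  assumes "p < q" and "0 \<le> p"
  shows "payoff Lam e f p q \<le> Lam * f p * p"
proof -
  have "payoff Lam e f p q = min (Lam * f p) e * p"
    using assms(1) unfolding payoff_def by simp
  also have "\<dots> \<le> Lam * f p * p"
    using assms(2) by (intro mult_right_mono) auto
  finally show ?thesis .
qed

lemma bdd_above_revenue: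
  fixes Lam B d :: real and f :: "real \<Rightarrow> real"
  assumes "0 \<le> Lam" and "0 \<le> B" and "\<forall>x\<in>{0..d}. f x \<le> B"
  shows "bdd_above ((\<lambda>x. Lam * f x * x) ` {0..d})"
proof (rule bdd_aboveI2)
  fix x
  assume x: "x \<in> {0..d}"
  have "f x * x \<le> B * x"
    using x assms(3) by (intro mult_right_mono) auto
  also have "\<dots> \<le> B * d"
    using x assms(2) by (intro mult_left_mono) auto
  finally show "Lam * f x * x \<le> Lam * (B * d)"
    using assms(1) by (simp add: mult.assoc mult_left_mono)
qed

theorem theorem6:
  fixes Lam e phi_h eps delta :: real and f :: "real \<Rightarrow> real"
  assumes "Lam > 0" and "e \<ge> Lam" and "phi_h > 0"
    and "\<forall>x\<in>{0..phi_h}. 0 < f x \<and> f x \<le> 1"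
    and "strict_concave_on {0..phi_h} f"
    and "strict_mono_on {0..phi_h} (\<lambda>x. - f x)"
    and "\<forall>x\<in>{0..phi_h}. f differentiable (at x within {0..phi_h})"
    and "f 0 = 1"
    and "eps > 0" and "0 < delta" and "delta \<le> phi_h"
    and "(SUP phi\<in>{0..delta}. Lam * f phi * phi) < eps"
  shows "eps_nash Lam e f phi_h eps delta delta"
  unfolding eps_nash_diagonal_iff
proof
  fix p
  assume p: "p \<in> {0..phi_h}"
  have nonneg: "0 \<le> payoff Lam e f delta delta"
    using assms(1,4,10,11) by (intro payoff_diagonal_nonneg) (auto simp: less_imp_le)
  have bdd: "bdd_above ((\<lambda>x. Lam * f x * x) ` {0..delta})"
    using assms(1,4,11) by (intro bdd_above_revenue[where B = 1]) auto
  show "payoff Lam e f p delta \<le> payoff Lam e f delta delta + eps"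
  proof (cases "p < delta")
    case True
    have "payoff Lam e f p delta \<le> Lam * f p * p"
      using True p by (intro payoff_below_le_revenue) auto
    also have "\<dots> \<le> (SUP x\<in>{0..delta}. Lam * f x * x)"
      using True p by (intro cSUP_upper[OF _ bdd]) auto
    finally show ?thesis
      using assms(12) nonneg by linarith
  next
    case False
    then show ?thesis
      using nonneg assms(9) payoff_above_eq_0[of delta p] by fastforce
  qed
qed

end
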